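(* In the model described in the context, if $\tau \leq 2f$, then it is impossible to implement an a-audit operation satisfying completeness.
   Context: Model. An asynchronous system has an arbitrary number of client processes (writers, readers, auditors) and $n$ storage objects $o_1,\dots,o_n$. Each $o_k$ is a linearisable loggable read/write register holding a block from a domain $\mathbb{B}$ and a log $L_k$ (initially empty). Its operations are: rw-write($b$), which stores $b$ and returns an ack; rw-read(), which returns the currently stored block (or $\perp\notin\mathbb{B}$ if none) and appends to $L_k$ the record $\langle p_r, \mathit{label}(b)\rangle$, where $p_r$ is the invoking reader and $\mathit{label}(b)$ identifies the value from which block $b$ was derived; and rw-getLog(), which returns $L_k$. On top of these objects, a multi-writer multi-reader register over a value domain $\mathbb{V}$ is emulated by information dispersal. An a-write($v$) encodes $v$ into $n$ blocks $b_{v_1},\dots,b_{v_n}$ and sends $b_{v_k}$ to $o_k$. A reader can recover $v$ from any $\tau$ distinct blocks of $v$, and cannot recover it from fewer; $\tau>f$. Reads (a-read) are fast, i.e. they complete in a single communication round-trip between the reader and the objects. Concurrency between operations is unlimited, and writes may remain incomplete. Faults. Writers and auditors are honest and can only crash. Faulty readers may crash or send read requests to only a subset of the objects. At most $f$ storage objects are faulty. A faulty object may crash, omit its block from readers, omit records from its log when queried by auditors, and report records of read operations that never occurred. Providing set: in a history $\sigma$, $P_{p_r,v}$ is the set of objects $o_k$ such that $\sigma$ contains both an event in which $o_k$ receives a write request to store $b_{v_k}$ and an event in which $o_k$ responds $b_{v_k}$ to a read request from $p_r$. A value $v$ is effectively read by $p_r$ in $\sigma$ iff $|P_{p_r,v}|\ge\tau$.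 Audit. An a-audit operation obtains logs via rw-getLog. To be available it relies only on an auditing quorum $A$ of $n-f$ objects. It returns a set $E_A$ of evidences. An evidence $\mathcal{E}_{p_r,v}$ (reporting that $p_r$ effectively read $v$) is created from at least $t\ge 1$ records $\langle p_r,\mathit{label}(v)\rangle$ coming from distinct objects; $t$ is a threshold parameter. Completeness: for every reader $p_r$ and every value $v$, if $v$ was effectively read by $p_r$ ($|P_{p_r,v}|\ge\tau$) before the a-audit is invoked, then $\mathcal{E}_{p_r,v}\in E_A$. *)

theory Defs
  imports Main
begin

(* Storage objects are o_0, ..., o_{n-1} (indices k < n).
   Readers have type 'r, values of the emulated register have type 'v;
   label(b_{v_k}) is identified with the value v itself.
   A log record <p_r, label(v)> is represented as the pair (p_r, v).

   A history sigma (up to the invocation of the a-audit) is abstracted by: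
     Fa  : the set of faulty storage objects
     W   : (k, v) in W  iff o_k received a write request to store b_{v_k}
     R   : (k, p, v) in R iff o_k responded b_{v_k} to a read request from p
     Lg  : Lg k is the log that object o_k reports to the auditor via rw-getLog *)

definition providing :: "(nat \<times> 'v) set \<Rightarrow> (nat \<times> 'r \<times> 'v) set \<Rightarrow> 'r \<Rightarrow> 'v \<Rightarrow> nat set" where
  "providing W R p v = {k. (k, v) \<in> W \<and> (k, p, v) \<in> R}"

definition effectively_read :: "nat \<Rightarrow> (nat \<times> 'v) set \<Rightarrow> (nat \<times> 'r \<times> 'v) set \<Rightarrow> 'r \<Rightarrow> 'v \<Rightarrow> bool" where
  "effectively_read \<tau> W R p v \<longleftrightarrow> card (providing W R p v) \<ge> \<tau>"

(* Admissible history: at most f faulty objects; correct objects only return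
   blocks they were written and report exactly the records of the reads they
   served; faulty objects may report arbitrary logs (omissions / forged records). *)
definition admissible ::
  "nat \<Rightarrow> nat \<Rightarrow> nat set \<Rightarrow> (nat \<times> 'v) set \<Rightarrow> (nat \<times> 'r \<times> 'v) set \<Rightarrow> (nat \<Rightarrow> ('r \<times> 'v) set) \<Rightarrow> bool" where
  "admissible n f Fa W R Lg \<longleftrightarrow>
     Fa \<subseteq> {..<n} \<and> card Fa \<le> f \<and>
     (\<forall>k v. (k, v) \<in> W \<longrightarrow> k < n) \<and>
     (\<forall>k p v. (k, p, v) \<in> R \<longrightarrow> k < n) \<and>
     (\<forall>k p v. k \<notin> Fa \<and> (k, p, v) \<in> R \<longrightarrow> (k, v) \<in> W) \<and>
     (\<forall>k < n. k \<notin> Fa \<longrightarrow> Lg k = {(p, v). (k, p, v) \<in> R})"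

(* An a-audit algorithm: given the auditing quorum A and the logs reported by the
   objects, it returns the set E_A of evidences (pairs (p_r, v) standing for E_{p_r,v}). *)
definition audit_alg :: "nat \<Rightarrow> (nat set \<Rightarrow> (nat \<Rightarrow> ('r \<times> 'v) set) \<Rightarrow> ('r \<times> 'v) set) \<Rightarrow> bool" where
  "audit_alg t aud \<longleftrightarrow>
     (\<forall>A L L'. (\<forall>k\<in>A. L k = L' k) \<longrightarrow> aud A L = aud A L') \<and>
     (\<forall>A L p v. (p, v) \<in> aud A L \<longrightarrow> t \<le> card {k \<in> A. (p, v) \<in> L k})"

definition audit_complete ::
  "nat \<Rightarrow> nat \<Rightarrow> nat \<Rightarrow> (nat set \<Rightarrow> (nat \<Rightarrow> ('r \<times> 'v) set) \<Rightarrow> ('r \<times> 'v) set) \<Rightarrow> bool" where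
  "audit_complete n f \<tau> aud \<longleftrightarrow>
     (\<forall>Fa W R Lg A. admissible n f Fa W R Lg \<and> A \<subseteq> {..<n} \<and> card A = n - f \<longrightarrow>
        (\<forall>p v. effectively_read \<tau> W R p v \<longrightarrow> (p, v) \<in> aud A Lg))"

end

theory Submission
  imports Defs
begin

text \<open>Let a reader obtain a value from the first \<open>\<tau>\<close> objects, so that it is
  effectively read. Of these, declare all but the first \<open>f\<close> faulty (that is
  \<open>\<tau> - f \<le> f\<close> objects) and let them omit the read from their logs. The
  auditing quorum of the last \<open>n - f\<close> objects then misses the only \<open>f\<close> correct
  holders of a record, so it sees none, whereas an evidence needs \<open>t \<ge> 1\<close> records.\<close>

lemma providing_single_read:
  "providing (S \<times> {v}) ((\<lambda>k. (k, p, v)) ` S) p v = S"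
  unfolding providing_def by auto

lemma admissible_single_read_with_omissions:
  assumes "S \<subseteq> {..<n}" and "Fa \<subseteq> {..<n}" and "card Fa \<le> f"
  shows "admissible n f Fa (S \<times> {v}) ((\<lambda>k. (k, p, v)) ` S)
           (\<lambda>k. if k \<in> S - Fa then {(p, v)} else {})"
  using assms unfolding admissible_def by auto

lemma audit_alg_evidence_has_record:
  assumes "audit_alg t aud" and "1 \<le> t" and "(p, v) \<in> aud A L"
  shows "\<exists>k\<in>A. (p, v) \<in> L k"
proof -
  have "1 \<le> card {k \<in> A. (p, v) \<in> L k}"
    using assms unfolding audit_alg_def by (meson order_trans)
  then have "{k \<in> A. (p, v) \<in> L k} \<noteq> {}" by (metis card.empty not_one_le_zero)
  then show ?thesis by blast
qed

theorem lemma2: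
  fixes n f \<tau> t :: nat
  assumes "1 \<le> t" and "f < \<tau>" and "\<tau> \<le> n" and "\<tau> \<le> 2 * f"
  shows "\<not> (\<exists>aud :: nat set \<Rightarrow> (nat \<Rightarrow> ('r \<times> 'v) set) \<Rightarrow> ('r \<times> 'v) set.
             audit_alg t aud \<and> audit_complete n f \<tau> aud)"
proof
  assume "\<exists>aud :: nat set \<Rightarrow> (nat \<Rightarrow> ('r \<times> 'v) set) \<Rightarrow> ('r \<times> 'v) set.
             audit_alg t aud \<and> audit_complete n f \<tau> aud"
  then obtain aud :: "nat set \<Rightarrow> (nat \<Rightarrow> ('r \<times> 'v) set) \<Rightarrow> ('r \<times> 'v) set"
    where alg: "audit_alg t aud" and complete: "audit_complete n f \<tau> aud" by blast
  fix p :: 'r and v :: 'v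
  define S where "S = {..<\<tau>}"
  define Fa where "Fa = {f..<\<tau>}"
  define L where "L = (\<lambda>k. if k \<in> S - Fa then {(p, v)} else ({} :: ('r \<times> 'v) set))"
  have adm: "admissible n f Fa (S \<times> {v}) ((\<lambda>k. (k, p, v)) ` S) L"
    unfolding L_def
    by (rule admissible_single_read_with_omissions) (use assms in \<open>auto simp: S_def Fa_def\<close>)
  have read: "effectively_read \<tau> (S \<times> {v}) ((\<lambda>k. (k, p, v)) ` S) p v"
    unfolding effectively_read_def providing_single_read S_def by simp
  have quorum: "{f..<n} \<subseteq> {..<n}" "card {f..<n} = n - f" by auto
  have "(p, v) \<in> aud {f..<n} L"
    using complete adm quorum read unfolding audit_complete_def by blast
  then obtain k where "k \<in> {f..<n}" and "(p, v) \<in> L k"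
    using audit_alg_evidence_has_record[OF alg assms(1)] by blast
  then show False by (auto simp: L_def S_def Fa_def split: if_splits)
qed

end
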